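(* Let $\mathcal{A}=\mathbb{C}\setminus(-\infty,0]$ and let $H$ be the principal branch on $\mathcal{A}$ given by $H(z)=\ln\frac{z(1+z)}{1+z^2}\big/\ln\frac{1+z^2}{1+z}$ for $z\ne1$ and $H(1)=1$ (principal logarithm). For $z=re^{i\theta}\in\mathcal{A}$, the limit $\lim_{z\to0}\frac1{zH(z)}=0$ holds uniformly for $\theta\in[-\frac\pi2,\frac\pi2]$, and the limit $\lim_{z\to\infty}\frac1{z^2H(z)}=0$ holds uniformly for $\theta\in(-\pi,\pi)$.
   Context: $H$ is the holomorphic extension to $\mathcal{A}$ of $H(x)=\frac{\ln x}{\ln(x^2+1)-\ln(x+1)}-1$, $x\in(0,\infty)$. *)

theory Defs
  imports "HOL-Analysis.Analysis"
begin

definition slitA :: "complex set" where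
  "slitA = - complex_of_real ` {..0}"

definition Hfun :: "complex \<Rightarrow> complex" where
  "Hfun z = (if z = 1 then 1
             else Ln (z * (1 + z) / (1 + z\<^sup>2)) / Ln ((1 + z\<^sup>2) / (1 + z)))"

end

theory Submission imports Defs begin

text \<open>Write \<open>H z = Ln w / Ln u\<close> with \<open>w = z(1+z)/(1+z\<^sup>2)\<close> and \<open>u = (1+z\<^sup>2)/(1+z)\<close>.
  Near \<open>0\<close> we have \<open>w \<approx> z\<close> and \<open>u = 1 + O(z)\<close>, so \<open>|Ln w| \<ge> -ln(2|z|)\<close> while
  \<open>|Ln u| = O(|z|)\<close>, whence \<open>1/(z H z) = O(1/ln(1/|z|))\<close>. Near \<open>\<infinity>\<close> we have
  \<open>w = 1 + t\<close> with \<open>|t| \<approx> 1/|z|\<close>, so \<open>|Ln w| \<ge> 1/(4|z|)\<close>, while \<open>|Ln u| \<le> ln(2|z|) + \<pi>\<close>,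
  whence \<open>1/(z\<^sup>2 H z) = O(ln |z| / |z|)\<close>. Both estimates depend on \<open>|z|\<close> only, which gives the
  uniformity in the argument.\<close>

lemma cis_ray_in_slitA:
  assumes "0 < r" "-pi < \<theta>" "\<theta> < pi"
  shows "complex_of_real r * cis \<theta> \<in> slitA"
proof -
  have "\<theta> = 0" if "sin \<theta> = 0"
    using that sin_zero_pi_iff[of \<theta>] assms by auto
  then show ?thesis
    using assms by (auto simp: slitA_def complex_eq_iff)
qed

lemma inverse_mult_Hfun:
  assumes "z \<noteq> 1"
  shows "1 / (a * Hfun z) = Ln ((1 + z\<^sup>2) / (1 + z)) / (a * Ln (z * (1 + z) / (1 + z\<^sup>2)))"
  using assms by (simp add: Hfun_def)

lemma minus_ln_norm_le_norm_Ln: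
  assumes "w \<noteq> 0"
  shows "- ln (norm w) \<le> norm (Ln w)"
  using abs_Re_le_cmod[of "Ln w"] assms by simp

lemma norm_Ln_le_ln_norm_plus_pi:
  assumes "1 \<le> norm u"
  shows "norm (Ln u) \<le> ln (norm u) + pi"
proof -
  have u0: "u \<noteq> 0" using assms by auto
  have "norm (Ln u) \<le> \<bar>Re (Ln u)\<bar> + \<bar>Im (Ln u)\<bar>" by (rule cmod_le)
  moreover have "\<bar>Re (Ln u)\<bar> = ln (norm u)" using u0 assms by simp
  moreover have "\<bar>Im (Ln u)\<bar> \<le> pi" using u0 Im_Ln_le_pi[of u] mpi_less_Im_Ln[of u] by auto
  ultimately show ?thesis by linarith
qed

lemma norm_Ln_one_plus_ge:
  assumes "norm t \<le> 1/3"
  shows "norm t / 2 \<le> norm (Ln (1 + t))"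
proof -
  have "norm (Ln (1 + t) - t) \<le> (norm t)\<^sup>2 / (1 - norm t)"
    using Ln_approx_linear[of t] assms by simp
  also have "\<dots> \<le> norm t / 2"
    using assms mult_left_mono[of "3 * norm t" 1 "norm t"] by (simp add: field_simps power2_eq_square)
  finally have "norm (Ln (1 + t) - t) \<le> norm t / 2" .
  moreover have "norm t - norm (Ln (1 + t)) \<le> norm (Ln (1 + t) - t)"
    using norm_triangle_ineq2[of t "Ln (1 + t)"] by (simp add: norm_minus_commute)
  ultimately show ?thesis by linarith
qed

lemma ln_plus_pi_le_sqrt:
  assumes "r \<ge> 4"
  shows "ln (2 * r) + pi \<le> 5 * sqrt r"
proof -
  have sqrt2: "sqrt 2 \<le> 3/2" by (rule real_le_lsqrt) (auto simp: power2_eq_square)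
  have sqrt_r: "sqrt r \<ge> 2" using assms real_sqrt_le_mono[of 4 r] by simp
  have "ln (2 * r) = 2 * ln (sqrt 2 * sqrt r)"
    using assms by (simp add: ln_sqrt real_sqrt_mult[symmetric])
  also have "\<dots> \<le> 2 * (sqrt 2 * sqrt r - 1)"
    using assms by (intro mult_left_mono ln_le_minus_one) auto
  also have "\<dots> \<le> 3 * sqrt r - 2"
    using mult_right_mono[OF sqrt2, of "sqrt r"] assms by simp
  finally show ?thesis using pi_less_4 sqrt_r by linarith
qed

lemma norm_inverse_mult_Hfun_near_0:
  assumes nz: "norm z = r" and r0: "0 < r" and r1: "r \<le> 1/4"
  shows "norm (1 / (z * Hfun z)) \<le> 4 / - ln (2 * r)"
proof -
  define w where "w = z * (1 + z) / (1 + z\<^sup>2)"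
  define t where "t = (z\<^sup>2 - z) / (1 + z)"
  have lo1: "norm (1 + z) \<ge> 1 - r" using norm_triangle_ineq[of "1 + z" "-z"] nz by simp
  have hi1: "norm (1 + z) \<le> 1 + r" using norm_triangle_ineq[of 1 z] nz by simp
  have lo2: "norm (1 + z\<^sup>2) \<ge> 1 - r\<^sup>2"
    using norm_triangle_ineq[of "1 + z\<^sup>2" "-(z\<^sup>2)"] nz by (simp add: norm_power)
  have r2: "r\<^sup>2 < 1"
    using power_mono[OF r1 less_imp_le[OF r0], of 2] by (simp add: power_divide)
  have nz0: "1 + z \<noteq> 0" "1 + z\<^sup>2 \<noteq> 0" "z \<noteq> 0" using lo1 lo2 r0 r1 r2 nz by auto
  have "norm w = r * norm (1 + z) / norm (1 + z\<^sup>2)"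
    by (simp add: w_def norm_mult norm_divide nz)
  also have "\<dots> \<le> r * (1 + r) / (1 - r\<^sup>2)"
    using hi1 lo2 r0 r2 by (intro frac_le mult_left_mono) auto
  also have "\<dots> = r / (1 - r)" using r2 r1 by (simp add: power2_eq_square field_simps)
  also have "\<dots> \<le> 2 * r" using r0 r1 by (simp add: field_simps)
  finally have "norm w \<le> 2 * r" .
  moreover have w0: "w \<noteq> 0" using nz0 by (simp add: w_def)
  ultimately have Ln_w: "- ln (2 * r) \<le> norm (Ln w)"
    using minus_ln_norm_le_norm_Ln[OF w0] ln_mono[of "norm w" "2 * r"] w0 by simp
  have Ln_u: "norm (Ln (1 + t)) \<le> 4 * r"
  proof -
    have "norm t = norm (z\<^sup>2 - z) / norm (1 + z)" by (simp add: t_def norm_divide)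
    also have "\<dots> \<le> (r\<^sup>2 + r) / (1 - r)"
      using lo1 r1 norm_triangle_ineq4[of "z\<^sup>2" z] nz by (intro frac_le) (auto simp: norm_power)
    also have "\<dots> \<le> 5/3 * r" using r0 r1 by (simp add: field_simps power2_eq_square)
    finally show ?thesis using norm_Ln_le[of t] r0 r1 by linarith
  qed
  have u: "(1 + z\<^sup>2) / (1 + z) = 1 + t"
    using nz0 by (simp add: t_def field_simps power2_eq_square)
  have "z \<noteq> 1" using nz r1 by auto
  then have "norm (1 / (z * Hfun z)) = norm (Ln (1 + t)) / (r * norm (Ln w))"
    by (simp add: inverse_mult_Hfun u w_def norm_divide norm_mult nz)
  also have "\<dots> \<le> (4 * r) / (r * - ln (2 * r))"
    using Ln_u Ln_w r0 r1 by (intro frac_le mult_left_mono mult_pos_pos) auto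
  also have "\<dots> = 4 / - ln (2 * r)" using r0 by simp
  finally show ?thesis .
qed

lemma norm_inverse_mult_Hfun_near_infinity:
  assumes nz: "norm z = r" and r4: "r \<ge> 4"
  shows "norm (1 / (z\<^sup>2 * Hfun z)) \<le> 20 / sqrt r"
proof -
  define t where "t = (z - 1) / (1 + z\<^sup>2)"
  define u where "u = (1 + z\<^sup>2) / (1 + z)"
  have lo1: "norm (1 + z) \<ge> r - 1" using norm_triangle_ineq[of "1 + z" "-1"] nz by simp
  have hi1: "norm (1 + z) \<le> r + 1" using norm_triangle_ineq[of 1 z] nz by simp
  have lo2: "norm (1 + z\<^sup>2) \<ge> r\<^sup>2 - 1"
    using norm_triangle_ineq[of "1 + z\<^sup>2" "-1"] nz by (simp add: norm_power)
  have hi2: "norm (1 + z\<^sup>2) \<le> r\<^sup>2 + 1"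
    using norm_triangle_ineq[of 1 "z\<^sup>2"] nz by (simp add: norm_power)
  have lo3: "norm (z - 1) \<ge> r - 1" using norm_triangle_ineq[of "z - 1" 1] nz by simp
  have hi3: "norm (z - 1) \<le> r + 1" using norm_triangle_ineq4[of z 1] nz by simp
  have r2: "r\<^sup>2 \<ge> 16" using power_mono[OF r4, of 2] by simp
  have sq: "r\<^sup>2 - 1 = (r + 1) * (r - 1)" by (simp add: power2_eq_square algebra_simps)
  have "4 * r \<le> r * r" using r4 by (intro mult_right_mono) auto
  moreover have "2 * r * (r - 1) - (r\<^sup>2 + 1) = r * r - 2 * r - 1"
    by (simp add: power2_eq_square algebra_simps)
  ultimately have key: "r\<^sup>2 + 1 \<le> 2 * r * (r - 1)" using r4 by linarith
  have nz0: "1 + z \<noteq> 0" "1 + z\<^sup>2 \<noteq> 0" using lo1 lo2 r4 r2 by auto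
  have "norm t \<le> (r + 1) / (r\<^sup>2 - 1)"
    unfolding t_def norm_divide using hi3 lo2 r2 r4 by (intro frac_le) auto
  also have "\<dots> = 1 / (r - 1)" using sq r4 by simp
  also have "\<dots> \<le> 1/3" using r4 by (simp add: field_simps)
  finally have "norm t \<le> 1/3" .
  moreover have "1 / (2 * r) \<le> (r - 1) / (r\<^sup>2 + 1)"
    using key r4 by (simp add: divide_simps mult.commute add_pos_nonneg)
  moreover have "(r - 1) / (r\<^sup>2 + 1) \<le> norm t"
    unfolding t_def norm_divide using lo3 hi2 lo2 r2 r4 by (intro frac_le) auto
  ultimately have Ln_w: "1 / (4 * r) \<le> norm (Ln (1 + t))"
    using norm_Ln_one_plus_ge[of t] by simp
  have "norm u \<le> (r\<^sup>2 + 1) / (r - 1)"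
    unfolding u_def norm_divide using hi2 lo1 r4 by (intro frac_le) auto
  also have "\<dots> \<le> 2 * r" using key r4 by (simp add: divide_le_eq)
  finally have "norm u \<le> 2 * r" .
  moreover have "r - 1 \<le> norm u"
  proof -
    have "r - 1 = (r\<^sup>2 - 1) / (r + 1)" using sq r4 by simp
    also have "\<dots> \<le> norm u"
      unfolding u_def norm_divide using lo2 hi1 r2 r4 nz0 by (intro frac_le) auto
    finally show ?thesis .
  qed
  ultimately have u_ge: "1 \<le> norm u" and u_le: "norm u \<le> 2 * r" using r4 by auto
  have "norm (Ln u) \<le> ln (norm u) + pi" using norm_Ln_le_ln_norm_plus_pi[OF u_ge] .
  also have "\<dots> \<le> ln (2 * r) + pi" using u_ge u_le by (intro add_right_mono ln_mono) auto
  also have "\<dots> \<le> 5 * sqrt r" using ln_plus_pi_le_sqrt[OF r4] .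
  finally have Ln_u: "norm (Ln u) \<le> 5 * sqrt r" .
  have w: "z * (1 + z) / (1 + z\<^sup>2) = 1 + t"
    using nz0 by (simp add: t_def field_simps power2_eq_square)
  have "z \<noteq> 1" using nz r4 by auto
  then have "norm (1 / (z\<^sup>2 * Hfun z)) = norm (Ln u) / (r\<^sup>2 * norm (Ln (1 + t)))"
    by (simp add: inverse_mult_Hfun u_def w norm_divide norm_mult nz norm_power)
  also have "\<dots> \<le> (5 * sqrt r) / (r\<^sup>2 * (1 / (4 * r)))"
    using Ln_u Ln_w r4 by (intro frac_le mult_left_mono mult_pos_pos) auto
  also have "\<dots> = 20 / sqrt r"
    using r4 by (simp add: power2_eq_square field_simps)
  finally show ?thesis .
qed

lemma four_div_minus_ln_eventually_less:
  fixes \<epsilon> :: real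
  assumes "0 < \<epsilon>"
  shows "\<exists>\<delta>>0. \<forall>r. 0 < r \<and> r < \<delta> \<longrightarrow> r \<le> 1/4 \<and> 4 / - ln (2 * r) < \<epsilon>"
proof (intro exI conjI allI impI)
  show "min (1/4) (exp (- 4 / \<epsilon>) / 2) > 0" by simp
  fix r assume r: "0 < r \<and> r < min (1/4) (exp (- 4 / \<epsilon>) / 2)"
  then show "r \<le> 1/4" by simp
  from r have "ln (2 * r) < - 4 / \<epsilon>"
    using ln_less_cancel_iff[of "2 * r" "exp (- 4 / \<epsilon>)"] by simp
  then have "4 < \<epsilon> * - ln (2 * r)" using assms by (simp add: field_simps)
  moreover have "0 < - ln (2 * r)" using r by simp
  ultimately show "4 / - ln (2 * r) < \<epsilon>" by (simp only: pos_divide_less_eq mult.commute)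
qed

lemma twenty_div_sqrt_eventually_less:
  fixes \<epsilon> :: real
  assumes "0 < \<epsilon>"
  shows "\<exists>R>0. \<forall>r. R < r \<longrightarrow> 4 \<le> r \<and> 20 / sqrt r < \<epsilon>"
proof (intro exI conjI allI impI)
  show "max 4 ((20 / \<epsilon>)\<^sup>2) > 0" by simp
  fix r assume r: "max 4 ((20 / \<epsilon>)\<^sup>2) < r"
  then show "4 \<le> r" by simp
  from r have "20 / \<epsilon> < sqrt r" using real_less_rsqrt by simp
  then show "20 / sqrt r < \<epsilon>" using assms r by (simp add: field_simps)
qed

theorem lemma4p4:
  shows "(\<forall>\<epsilon>>0. \<exists>\<delta>>0. \<forall>r \<theta>. 0 < r \<and> r < \<delta> \<and> \<theta> \<in> {-(pi/2)..pi/2} \<longrightarrow>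
            (let z = complex_of_real r * cis \<theta> in z \<in> slitA \<and> norm (1 / (z * Hfun z)) < \<epsilon>))
       \<and> (\<forall>\<epsilon>>0. \<exists>R>0. \<forall>r \<theta>. r > R \<and> \<theta> \<in> {-pi<..<pi} \<longrightarrow>
            (let z = complex_of_real r * cis \<theta> in z \<in> slitA \<and> norm (1 / (z\<^sup>2 * Hfun z)) < \<epsilon>))"
proof (intro conjI allI impI)
  fix \<epsilon> :: real assume "\<epsilon> > 0"
  then obtain \<delta> where "\<delta> > 0"
    and \<delta>: "\<And>r. 0 < r \<Longrightarrow> r < \<delta> \<Longrightarrow> r \<le> 1/4 \<and> 4 / - ln (2 * r) < \<epsilon>"
    using four_div_minus_ln_eventually_less by blast
  have "let z = complex_of_real r * cis \<theta> in z \<in> slitA \<and> norm (1 / (z * Hfun z)) < \<epsilon>"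
    if "0 < r" "r < \<delta>" "\<theta> \<in> {-(pi/2)..pi/2}" for r \<theta>
    using that \<delta>[OF that(1,2)] cis_ray_in_slitA[of r \<theta>] pi_gt_zero
      norm_inverse_mult_Hfun_near_0[of "complex_of_real r * cis \<theta>" r]
    by (auto simp: Let_def norm_mult)
  with \<open>\<delta> > 0\<close> show "\<exists>\<delta>>0. \<forall>r \<theta>. 0 < r \<and> r < \<delta> \<and> \<theta> \<in> {-(pi/2)..pi/2} \<longrightarrow>
      (let z = complex_of_real r * cis \<theta> in z \<in> slitA \<and> norm (1 / (z * Hfun z)) < \<epsilon>)"
    by blast
next
  fix \<epsilon> :: real assume "\<epsilon> > 0"
  then obtain R where "R > 0" and R: "\<And>r. R < r \<Longrightarrow> 4 \<le> r \<and> 20 / sqrt r < \<epsilon>"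
    using twenty_div_sqrt_eventually_less by blast
  have "let z = complex_of_real r * cis \<theta> in z \<in> slitA \<and> norm (1 / (z\<^sup>2 * Hfun z)) < \<epsilon>"
    if "R < r" "\<theta> \<in> {-pi<..<pi}" for r \<theta>
    using that R[OF that(1)] \<open>R > 0\<close> cis_ray_in_slitA[of r \<theta>]
      norm_inverse_mult_Hfun_near_infinity[of "complex_of_real r * cis \<theta>" r]
    by (auto simp: Let_def norm_mult)
  with \<open>R > 0\<close> show "\<exists>R>0. \<forall>r \<theta>. r > R \<and> \<theta> \<in> {-pi<..<pi} \<longrightarrow>
      (let z = complex_of_real r * cis \<theta> in z \<in> slitA \<and> norm (1 / (z\<^sup>2 * Hfun z)) < \<epsilon>)"
    by blast
qed

end
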